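(* Let $\{A_n\}_{n\geq1}$ be an increasing sequence of finite sets of isolated points of $\mathbb{R}^2$ with $f(n)=\sharp A_n\to+\infty$, $S=\bigcup_n A_n$, and $\{Z(x):x\in S\}$ a random field whose variables all have distribution function $F$, $\overline F=1-F$. Let $\tau>0$ and $\{u_n(\tau)\}$ be reals with $E\big(\sum_{x\in A_n}\mathbf{1}_{\{Z(x)>u_n(\tau)\}}\big)\to\tau$. Suppose $\mathbf{Z}_A=\{Z(x):x\in A_n\}_{n\ge1}$ satisfies $D(u_n(\tau),k_n,l_n)$ and let, for each $n$, $\mathcal{B}_n=\{B_n^{(s,t)}:s,t=1,\dots,k_n\}$ be a family of $k_n^2$ pairwise disjoint subsets of $A_n$ with $\sharp B_n^{(s,t)}\sim f(n)/k_n^2$ and $P(\bigvee_{x\in A_n}Z(x)\le u_n(\tau))-\prod_{s,t}P(\bigvee_{x\in B_n^{(s,t)}}Z(x)\le u_n(\tau))\to0$. Write $N_n^{(s,t)}=\sum_{x\in B_n^{(s,t)}}\mathbf 1_{\{Z(x)>u_n(\tau)\}}$. If $\mathbf{Z}_A$ has spatial extremal index $\theta_A$, then $$\theta_A=\lim_{n\to+\infty}\frac{1}{k_n^2}\sum_{B_n^{(s,t)}\in\mathcal{B}_n}\Big(E\big(N_n^{(s,t)}\,\big|\,N_n^{(s,t)}>0\big)\Big)^{-1}.$$ Moreover, if $\lim_{n\to\infty}E(N_n^{(s,t)}\mid N_n^{(s,t)}>0)=1$ uniformly in $s,t\in\{1,\dots,k_n\}$, then $\theta_A=1$.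
   Context: $\pi_1,\pi_2$ are coordinate projections; $f_i(n)=\sharp\pi_i(A_n)$; $\bigvee$ is maximum. The pair $(I,J)$ is in $\mathcal{S}(\pi_i(A_n),l_n)$ if $I,J$ are sets of consecutive values of $\pi_i(A_n)$ separated by at least $l_n$ values of $\pi_i(A_n)$. Condition $D(u_n,k_n,l_n)$: there are positive integer sequences $l_n\to\infty$, $k_n\to\infty$ with $k_nl_nf_i(n)/f(n)\to0$ ($i=1,2$) and $k_n^2\alpha(l_n,u_n)\to0$, where $\alpha(l_n,u_n)=\sup|P(\bigvee_{x\in C\cup D}Z(x)\le u_n)-P(\bigvee_{x\in C}Z(x)\le u_n)P(\bigvee_{x\in D}Z(x)\le u_n)|$ over subsets $C,D\subseteq A_n$ whose $\pi_i$-projections form a pair in $\mathcal{S}(\pi_i(A_n),l_n)$ for each $i$. Spatial extremal index: $\mathbf{Z}_A$ has spatial extremal index $\theta_A$ if for each $\tau>0$ and any real sequence $\{u_n(\tau)\}$ with $E(\sum_{x\in A_n}\mathbf 1_{\{Z(x)>u_n(\tau)\}})\to\tau$ one has $P(\bigvee_{x\in A_n}Z(x)\le u_n(\tau))\to e^{-\theta_A\tau}$. *)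

theory Defs
  imports "HOL-Probability.Probability"
begin

definition consecutive_in :: "real set \<Rightarrow> real set \<Rightarrow> bool" where
  "consecutive_in T I \<longleftrightarrow> I \<noteq> {} \<and> finite I \<and> I \<subseteq> T \<and>
     (\<forall>t\<in>T. Min I \<le> t \<and> t \<le> Max I \<longrightarrow> t \<in> I)"

definition sep_pairs :: "real set \<Rightarrow> nat \<Rightarrow> (real set \<times> real set) set" where
  "sep_pairs T l = {(I, J). consecutive_in T I \<and> consecutive_in T J \<and>
     ((Max I < Min J \<and> card {t\<in>T. Max I < t \<and> t < Min J} \<ge> l) \<or>
      (Max J < Min I \<and> card {t\<in>T. Max J < t \<and> t < Min I} \<ge> l))}"

definition max_le_event :: "'w measure \<Rightarrow> (real \<times> real \<Rightarrow> 'w \<Rightarrow> real) \<Rightarrow> (real \<times> real) set \<Rightarrow> real \<Rightarrow> 'w set" where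
  "max_le_event M Z C u = {\<omega>\<in>space M. \<forall>x\<in>C. Z x \<omega> \<le> u}"

text \<open>Mixing coefficient alpha(l_n,u_n) (for the n-th set A_n); the supremum is over a finite set
  of nonnegative numbers, 0 is included so that the supremum is well defined.\<close>
definition mixing_coeff :: "'w measure \<Rightarrow> (real \<times> real \<Rightarrow> 'w \<Rightarrow> real) \<Rightarrow> (nat \<Rightarrow> (real \<times> real) set)
    \<Rightarrow> (nat \<Rightarrow> nat) \<Rightarrow> (nat \<Rightarrow> real) \<Rightarrow> nat \<Rightarrow> real" where
  "mixing_coeff M Z A l u n = Sup (insert 0
     {\<bar>measure M (max_le_event M Z (C \<union> D) (u n))
        - measure M (max_le_event M Z C (u n)) * measure M (max_le_event M Z D (u n))\<bar> | C D.
       C \<subseteq> A n \<and> D \<subseteq> A n \<and>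
       (fst ` C, fst ` D) \<in> sep_pairs (fst ` A n) (l n) \<and>
       (snd ` C, snd ` D) \<in> sep_pairs (snd ` A n) (l n)})"

definition cond_D :: "'w measure \<Rightarrow> (real \<times> real \<Rightarrow> 'w \<Rightarrow> real) \<Rightarrow> (nat \<Rightarrow> (real \<times> real) set)
    \<Rightarrow> (nat \<Rightarrow> real) \<Rightarrow> (nat \<Rightarrow> nat) \<Rightarrow> (nat \<Rightarrow> nat) \<Rightarrow> bool" where
  "cond_D M Z A u k l \<longleftrightarrow>
     (\<forall>n. 0 < k n \<and> 0 < l n) \<and>
     filterlim l at_top sequentially \<and> filterlim k at_top sequentially \<and>
     (\<lambda>n. real (k n) * real (l n) * real (card (fst ` A n)) / real (card (A n))) \<longlonglongrightarrow> 0 \<and>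
     (\<lambda>n. real (k n) * real (l n) * real (card (snd ` A n)) / real (card (A n))) \<longlonglongrightarrow> 0 \<and>
     (\<lambda>n. (real (k n))\<^sup>2 * mixing_coeff M Z A l u n) \<longlonglongrightarrow> 0"

definition exceed_count :: "(real \<times> real \<Rightarrow> 'w \<Rightarrow> real) \<Rightarrow> (real \<times> real) set \<Rightarrow> real \<Rightarrow> 'w \<Rightarrow> real" where
  "exceed_count Z B u \<omega> = (\<Sum>x\<in>B. if Z x \<omega> > u then 1 else 0)"

definition spatial_extremal_index :: "'w measure \<Rightarrow> (real \<times> real \<Rightarrow> 'w \<Rightarrow> real) \<Rightarrow> (nat \<Rightarrow> (real \<times> real) set) \<Rightarrow> real \<Rightarrow> bool" where
  "spatial_extremal_index M Z A \<theta> \<longleftrightarrow>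
     (\<forall>\<tau>>0. \<forall>v :: nat \<Rightarrow> real.
        (\<lambda>n. integral\<^sup>L M (exceed_count Z (A n) (v n))) \<longlonglongrightarrow> \<tau> \<longrightarrow>
        (\<lambda>n. measure M (max_le_event M Z (A n) (v n))) \<longlonglongrightarrow> exp (- \<theta> * \<tau>))"

definition cond_exp_pos :: "'w measure \<Rightarrow> ('w \<Rightarrow> real) \<Rightarrow> real" where
  "cond_exp_pos M N = integral\<^sup>L M (\<lambda>\<omega>. N \<omega> * indicator {\<omega>\<in>space M. N \<omega> > 0} \<omega>)
                        / measure M {\<omega>\<in>space M. N \<omega> > 0}"

end

theory Submission
  imports Defs
begin

text \<open>For a block \<open>B\<close> let \<open>p\<close> be the probability that \<open>B\<close> contains an exceedance and
  \<open>e = E N\<close> its expected number of exceedances. Then \<open>E(N | N > 0) = e / p\<close> and \<open>p \<le> e\<close>,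
  and the balanced block sizes make \<open>k\<^sub>n\<^sup>2 e \<rightarrow> \<tau>\<close> uniformly over the blocks. The block
  approximation and the extremal index give \<open>\<Prod> (1 - p) \<rightarrow> exp (-\<theta>\<tau>)\<close>; as every \<open>p\<close> is
  \<open>O(1/k\<^sub>n\<^sup>2)\<close>, taking logarithms yields \<open>\<Sum> p \<rightarrow> \<theta>\<tau>\<close>, so the average of \<open>p / e\<close> over the
  \<open>k\<^sub>n\<^sup>2\<close> blocks tends to \<open>\<theta>\<close>.\<close>

lemma ln_prod_one_minus_bounds:
  fixes p :: "'i \<Rightarrow> real"
  assumes "finite J" and p: "\<And>i. i \<in> J \<Longrightarrow> 0 \<le> p i \<and> p i \<le> m" and "m \<le> 1/2"
  shows "ln (\<Prod>i\<in>J. 1 - p i) \<le> - (\<Sum>i\<in>J. p i)"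
    and "- (1 + 2 * m) * (\<Sum>i\<in>J. p i) \<le> ln (\<Prod>i\<in>J. 1 - p i)"
proof -
  have ln_prod_eq: "ln (\<Prod>i\<in>J. 1 - p i) = (\<Sum>i\<in>J. ln (1 - p i))"
    by (rule ln_prod) (use assms in fastforce)+
  have "ln (1 - p i) \<le> - p i" if "i \<in> J" for i
    by (rule ln_one_minus_pos_upper_bound) (use p[OF that] assms(3) in auto)
  then show "ln (\<Prod>i\<in>J. 1 - p i) \<le> - (\<Sum>i\<in>J. p i)"
    unfolding ln_prod_eq sum_negf[symmetric] by (rule sum_mono)
  have "- (1 + 2 * m) * p i \<le> ln (1 - p i)" if "i \<in> J" for i
  proof -
    have "(p i)\<^sup>2 \<le> m * p i"
      unfolding power2_eq_square using p[OF that] by (simp add: mult_right_mono)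
    moreover have "- p i - 2 * (p i)\<^sup>2 \<le> ln (1 - p i)"
      by (rule ln_one_minus_pos_lower_bound) (use p[OF that] assms(3) in auto)
    ultimately show ?thesis by (simp add: algebra_simps)
  qed
  then have "(\<Sum>i\<in>J. - (1 + 2 * m) * p i) \<le> (\<Sum>i\<in>J. ln (1 - p i))"
    by (rule sum_mono)
  then show "- (1 + 2 * m) * (\<Sum>i\<in>J. p i) \<le> ln (\<Prod>i\<in>J. 1 - p i)"
    unfolding ln_prod_eq by (simp add: sum_distrib_left)
qed

lemma sum_tendsto_of_prod_one_minus_tendsto:
  fixes p :: "nat \<Rightarrow> 'i \<Rightarrow> real"
  assumes fin: "\<And>n. finite (J n)"
    and p: "eventually (\<lambda>n. \<forall>i\<in>J n. 0 \<le> p n i \<and> p n i \<le> m n) sequentially"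
    and m: "m \<longlonglongrightarrow> 0"
    and prod: "(\<lambda>n. \<Prod>i\<in>J n. 1 - p n i) \<longlonglongrightarrow> L" and "L > 0"
  shows "(\<lambda>n. \<Sum>i\<in>J n. p n i) \<longlonglongrightarrow> - ln L"
proof -
  define q where "q n = (\<Sum>i\<in>J n. p n i)" for n
  define P where "P n = ln (\<Prod>i\<in>J n. 1 - p n i)" for n
  have P: "P \<longlonglongrightarrow> ln L"
    unfolding P_def by (rule tendsto_ln[OF prod]) (use \<open>L > 0\<close> in simp)
  have "eventually (\<lambda>n. m n < 1/2) sequentially"
    using order_tendstoD(2)[OF m, of "1/2"] by simp
  with p have "eventually (\<lambda>n. norm (P n + q n) \<le> 2 * \<bar>m n\<bar> * - P n) sequentially"
  proof eventually_elim
    case (elim n)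
    have "\<And>i. i \<in> J n \<Longrightarrow> 0 \<le> p n i \<and> p n i \<le> m n" "m n \<le> 1/2"
      using elim by auto
    note bounds = ln_prod_one_minus_bounds[where J = "J n" and p = "p n" and m = "m n", OF fin this,
        folded P_def q_def]
    have "0 \<le> q n" unfolding q_def by (rule sum_nonneg) (use elim in blast)
    have "m n * q n \<le> \<bar>m n\<bar> * q n"
      using \<open>0 \<le> q n\<close> by (intro mult_right_mono) auto
    also have "\<dots> \<le> \<bar>m n\<bar> * - P n"
      using bounds(1) by (intro mult_left_mono) auto
    finally show ?case using bounds by (simp add: abs_le_iff algebra_simps)
  qed
  moreover have "(\<lambda>n. 2 * \<bar>m n\<bar> * - P n) \<longlonglongrightarrow> 0"
    using tendsto_mult[OF tendsto_mult[OF tendsto_const tendsto_rabs[OF m]] tendsto_minus[OF P]]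
    by simp
  ultimately have "(\<lambda>n. P n + q n) \<longlonglongrightarrow> 0"
    by (rule Lim_null_comparison)
  from tendsto_diff[OF this P] show ?thesis
    by (simp add: q_def)
qed

lemma mean_ratio_sub_sum_le:
  fixes p e :: "'i \<Rightarrow> real"
  assumes \<tau>: "\<tau> > 0" and d: "d \<le> \<tau> / 2"
    and p: "\<And>i. i \<in> J \<Longrightarrow> 0 \<le> p i"
    and e: "\<And>i. i \<in> J \<Longrightarrow> \<bar>K * e i - \<tau>\<bar> \<le> d"
  shows "\<bar>(1 / K) * (\<Sum>i\<in>J. p i / e i) - (\<Sum>i\<in>J. p i) / \<tau>\<bar> \<le> 2 * d / \<tau>\<^sup>2 * (\<Sum>i\<in>J. p i)"
proof -
  have term_le: "\<bar>p i / (K * e i) - p i / \<tau>\<bar> \<le> 2 * d / \<tau>\<^sup>2 * p i" if "i \<in> J" for i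
  proof -
    have Ke: "\<tau> / 2 \<le> K * e i" using e[OF that] d by linarith
    then have "K * e i > 0" using \<tau> by linarith
    moreover have "\<bar>p i / x - p i / \<tau>\<bar> = p i * \<bar>\<tau> - x\<bar> / (x * \<tau>)" if "x > 0" for x
    proof -
      have "p i / x - p i / \<tau> = p i * (\<tau> - x) / (x * \<tau>)"
        using that \<tau> by (simp add: field_simps)
      then show ?thesis using that \<tau> p[OF \<open>i \<in> J\<close>] by (simp add: abs_divide abs_mult)
    qed
    ultimately have "\<bar>p i / (K * e i) - p i / \<tau>\<bar> = p i * \<bar>\<tau> - K * e i\<bar> / (K * e i * \<tau>)"
      by blast
    also have "\<dots> \<le> p i * d / (\<tau> / 2 * \<tau>)"
      using Ke e[OF that] p[OF that] \<tau>
      by (intro frac_le mult_left_mono mult_right_mono mult_nonneg_nonneg) auto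
    also have "\<dots> = 2 * d / \<tau>\<^sup>2 * p i" by (simp add: power2_eq_square)
    finally show ?thesis .
  qed
  have "(1 / K) * (\<Sum>i\<in>J. p i / e i) - (\<Sum>i\<in>J. p i) / \<tau> = (\<Sum>i\<in>J. p i / (K * e i) - p i / \<tau>)"
    by (simp add: sum_subtractf sum_distrib_left sum_divide_distrib)
  also have "\<bar>\<dots>\<bar> \<le> (\<Sum>i\<in>J. 2 * d / \<tau>\<^sup>2 * p i)"
    using term_le by (intro order_trans[OF sum_abs sum_mono]) auto
  finally show ?thesis by (simp add: sum_distrib_left)
qed

lemma mean_ratio_tendsto:
  fixes p e :: "nat \<Rightarrow> 'i \<Rightarrow> real"
  assumes fin: "\<And>n. finite (J n)"
    and K: "filterlim K at_top sequentially"
    and p: "\<And>n i. i \<in> J n \<Longrightarrow> 0 \<le> p n i \<and> p n i \<le> e n i"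
    and e: "\<And>n i. i \<in> J n \<Longrightarrow> \<bar>K n * e n i - \<tau>\<bar> \<le> d n"
    and d: "d \<longlonglongrightarrow> 0" and "\<tau> > 0"
    and prod: "(\<lambda>n. \<Prod>i\<in>J n. 1 - p n i) \<longlonglongrightarrow> exp (- \<theta> * \<tau>)"
  shows "(\<lambda>n. (1 / K n) * (\<Sum>i\<in>J n. p n i / e n i)) \<longlonglongrightarrow> \<theta>"
proof -
  define q where "q n = (\<Sum>i\<in>J n. p n i)" for n
  have K_pos: "eventually (\<lambda>n. K n > 0) sequentially"
    using K by (simp add: filterlim_at_top_dense)
  have "(\<lambda>n. (\<tau> + d n) / K n) \<longlonglongrightarrow> 0"
    by (rule tendsto_divide_0[OF tendsto_add[OF tendsto_const d] filterlim_at_top_imp_at_infinity[OF K]])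
  moreover from K_pos have "eventually (\<lambda>n. \<forall>i\<in>J n. 0 \<le> p n i \<and> p n i \<le> (\<tau> + d n) / K n) sequentially"
  proof eventually_elim
    case (elim n)
    have "p n i \<le> (\<tau> + d n) / K n" if "i \<in> J n" for i
    proof -
      have "K n * p n i \<le> K n * e n i" using p[OF that] elim by (simp add: mult_left_mono)
      also have "\<dots> \<le> \<tau> + d n" using e[OF that] by (simp add: abs_le_iff)
      finally show ?thesis using elim by (simp add: pos_le_divide_eq mult.commute)
    qed
    then show ?case using p by blast
  qed
  ultimately have q: "q \<longlonglongrightarrow> \<theta> * \<tau>"
    using sum_tendsto_of_prod_one_minus_tendsto[OF fin _ _ prod] unfolding q_def by simp
  have "eventually (\<lambda>n. d n < \<tau> / 2) sequentially"
    using order_tendstoD(2)[OF d, of "\<tau> / 2"] \<open>\<tau> > 0\<close> by simp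
  with K_pos have "eventually (\<lambda>n. norm ((1 / K n) * (\<Sum>i\<in>J n. p n i / e n i) - q n / \<tau>)
      \<le> 2 * d n / \<tau>\<^sup>2 * q n) sequentially"
  proof eventually_elim
    case (elim n)
    then show ?case
      unfolding q_def real_norm_def
      by (intro mean_ratio_sub_sum_le) (use p e \<open>\<tau> > 0\<close> in auto)
  qed
  moreover have "(\<lambda>n. 2 * d n / \<tau>\<^sup>2 * q n) \<longlonglongrightarrow> 2 * 0 / \<tau>\<^sup>2 * (\<theta> * \<tau>)"
    by (intro tendsto_intros d q) (use \<open>\<tau> > 0\<close> in simp)
  then have "(\<lambda>n. 2 * d n / \<tau>\<^sup>2 * q n) \<longlonglongrightarrow> 0"
    by simp
  ultimately have "(\<lambda>n. (1 / K n) * (\<Sum>i\<in>J n. p n i / e n i) - q n / \<tau>) \<longlonglongrightarrow> 0"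
    by (rule Lim_null_comparison)
  moreover have "(\<lambda>n. q n / \<tau>) \<longlonglongrightarrow> \<theta>"
    using tendsto_divide[OF q tendsto_const[of \<tau>]] \<open>\<tau> > 0\<close> by simp
  ultimately show ?thesis
    using tendsto_add by fastforce
qed

lemma inverse_near_one:
  fixes c \<delta> :: real
  assumes "\<bar>c - 1\<bar> < \<delta>" "\<delta> \<le> 1/2"
  shows "\<bar>inverse c - 1\<bar> \<le> 2 * \<delta>"
proof -
  have c: "c > 1/2" using assms by linarith
  have "\<bar>inverse c - 1\<bar> = \<bar>1 - c\<bar> / c"
    using c by (simp add: field_simps abs_divide)
  also have "\<dots> \<le> \<delta> / c" using assms c by (intro divide_right_mono) auto
  also have "\<dots> \<le> \<delta> / (1/2)" using assms c by (intro divide_left_mono) auto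
  finally show ?thesis by simp
qed

lemma mean_near:
  fixes f :: "'i \<Rightarrow> real"
  assumes "finite J" "J \<noteq> {}" and f: "\<And>i. i \<in> J \<Longrightarrow> \<bar>f i - c\<bar> \<le> a"
  shows "\<bar>(1 / real (card J)) * (\<Sum>i\<in>J. f i) - c\<bar> \<le> a"
proof -
  have K: "real (card J) > 0" using assms by auto
  have "(1 / real (card J)) * (\<Sum>i\<in>J. f i) - c = (1 / real (card J)) * (\<Sum>i\<in>J. f i - c)"
    using K by (simp add: sum_subtractf field_simps)
  also have "\<bar>\<dots>\<bar> \<le> (1 / real (card J)) * (\<Sum>i\<in>J. \<bar>f i - c\<bar>)"
    using K by (simp add: abs_mult divide_right_mono[OF sum_abs])
  also have "\<dots> \<le> (1 / real (card J)) * (\<Sum>i\<in>J. a)"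
    using K f by (intro mult_left_mono sum_mono) auto
  also have "\<dots> = a" using K by simp
  finally show ?thesis .
qed

lemma mean_inverse_tendsto_one:
  fixes g :: "nat \<Rightarrow> 'i \<Rightarrow> real"
  assumes "\<And>n. finite (J n)" "\<And>n. J n \<noteq> {}"
    and g: "\<forall>\<epsilon>>0. \<exists>N. \<forall>n\<ge>N. \<forall>i\<in>J n. \<bar>g n i - 1\<bar> < \<epsilon>"
  shows "(\<lambda>n. (1 / real (card (J n))) * (\<Sum>i\<in>J n. inverse (g n i))) \<longlonglongrightarrow> 1"
  unfolding LIMSEQ_def dist_real_def
proof (intro allI impI)
  fix r :: real
  assume "r > 0"
  then have "min (1/2) (r/4) > 0" by simp
  then obtain N where N: "\<forall>n\<ge>N. \<forall>i\<in>J n. \<bar>g n i - 1\<bar> < min (1/2) (r/4)"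
    using g by blast
  have "\<bar>(1 / real (card (J n))) * (\<Sum>i\<in>J n. inverse (g n i)) - 1\<bar> < r" if "n \<ge> N" for n
  proof -
    have "\<bar>(1 / real (card (J n))) * (\<Sum>i\<in>J n. inverse (g n i)) - 1\<bar> \<le> 2 * min (1/2) (r/4)"
      using N that by (intro mean_near inverse_near_one assms) auto
    also have "\<dots> < r" using \<open>r > 0\<close> by simp
    finally show ?thesis .
  qed
  then show "\<exists>N. \<forall>n\<ge>N. \<bar>(1 / real (card (J n))) * (\<Sum>i\<in>J n. inverse (g n i)) - 1\<bar> < r"
    by blast
qed

lemma abs_rescaled_sub_le:
  fixes a c K x \<tau> \<delta> :: real
  assumes "0 \<le> c" "c \<le> a" "\<bar>c * K / a - 1\<bar> \<le> \<delta>"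
  shows "\<bar>K * (c * x) - \<tau>\<bar> \<le> \<delta> * \<bar>a * x\<bar> + \<bar>a * x - \<tau>\<bar>"
proof (cases "a = 0")
  case True
  then show ?thesis using assms by simp
next
  case False
  then have "K * (c * x) - \<tau> = (c * K / a - 1) * (a * x) + (a * x - \<tau>)"
    by (simp add: field_simps)
  also have "\<bar>\<dots>\<bar> \<le> \<bar>c * K / a - 1\<bar> * \<bar>a * x\<bar> + \<bar>a * x - \<tau>\<bar>"
    by (metis abs_mult abs_triangle_ineq)
  also have "\<dots> \<le> \<delta> * \<bar>a * x\<bar> + \<bar>a * x - \<tau>\<bar>"
    using assms(3) by (simp add: mult_right_mono)
  finally show ?thesis .
qed

lemma mean_over_grid:
  fixes f :: "nat \<Rightarrow> nat \<Rightarrow> real"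
  shows "1 / (real k)\<^sup>2 * (\<Sum>s\<in>{1..k}. \<Sum>t\<in>{1..k}. f s t)
    = 1 / real (card ({1..k} \<times> {1..k})) * (\<Sum>(s, t)\<in>{1..k} \<times> {1..k}. f s t)"
  by (simp add: card_cartesian_product sum.cartesian_product power2_eq_square)

lemma exceed_count_nonneg: "0 \<le> exceed_count Z C v \<omega>"
  unfolding exceed_count_def by (rule sum_nonneg) auto

lemma exceed_count_pos_set:
  assumes "finite C"
  shows "{\<omega>\<in>space M. 0 < exceed_count Z C v \<omega>} = space M - max_le_event M Z C v"
proof -
  have "exceed_count Z C v \<omega> = 0 \<longleftrightarrow> (\<forall>x\<in>C. Z x \<omega> \<le> v)" for \<omega>
    unfolding exceed_count_def using assms by (subst sum_nonneg_eq_0_iff) (auto simp: not_less)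
  then show ?thesis
    unfolding max_le_event_def using exceed_count_nonneg[of Z C v] by (auto simp: order_less_le)
qed

context prob_space
begin

lemma max_le_event_in_events:
  assumes "finite C" and "\<And>x. x \<in> C \<Longrightarrow> Z x \<in> borel_measurable M"
  shows "max_le_event M Z C v \<in> events"
  unfolding max_le_event_def using assms by measurable

lemma integral_exceed_count:
  assumes "finite C" and meas: "\<And>x. x \<in> C \<Longrightarrow> Z x \<in> borel_measurable M"
  shows "integral\<^sup>L M (exceed_count Z C v) = (\<Sum>x\<in>C. prob {\<omega>\<in>space M. v < Z x \<omega>})"
proof -
  have "integral\<^sup>L M (exceed_count Z C v)
      = integral\<^sup>L M (\<lambda>\<omega>. \<Sum>x\<in>C. indicator {\<omega>\<in>space M. v < Z x \<omega>} \<omega>)"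
    by (rule Bochner_Integration.integral_cong)
      (auto simp: exceed_count_def indicator_def intro!: sum.cong)
  also have "\<dots> = (\<Sum>x\<in>C. prob {\<omega>\<in>space M. v < Z x \<omega>})"
  proof (subst Bochner_Integration.integral_sum)
    have events: "{\<omega>\<in>space M. v < Z x \<omega>} \<in> events" if "x \<in> C" for x
      using meas[OF that] by measurable
    show "integrable M (indicat_real {\<omega>\<in>space M. v < Z x \<omega>})" if "x \<in> C" for x
      using events[OF that] by (intro integrable_real_indicator) (auto simp: less_top[symmetric])
    show "(\<Sum>x\<in>C. expectation (indicat_real {\<omega>\<in>space M. v < Z x \<omega>}))
        = (\<Sum>x\<in>C. prob {\<omega>\<in>space M. v < Z x \<omega>})"
      using events by (intro sum.cong) auto
  qed
  finally show ?thesis .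
qed

lemma integral_exceed_count_eq_card:
  assumes "finite C" and meas: "\<And>x. x \<in> C \<Longrightarrow> Z x \<in> borel_measurable M"
    and distr: "\<And>x. x \<in> C \<Longrightarrow> prob {\<omega>\<in>space M. Z x \<omega> \<le> v} = c"
  shows "integral\<^sup>L M (exceed_count Z C v) = real (card C) * (1 - c)"
proof -
  have "prob {\<omega>\<in>space M. v < Z x \<omega>} = 1 - c" if "x \<in> C" for x
  proof -
    have "{\<omega>\<in>space M. Z x \<omega> \<le> v} \<in> events" using meas[OF that] by measurable
    moreover have "{\<omega>\<in>space M. v < Z x \<omega>} = space M - {\<omega>\<in>space M. Z x \<omega> \<le> v}" by auto
    ultimately show ?thesis using prob_compl distr[OF that] by simp
  qed
  then show ?thesis using integral_exceed_count[OF assms(1,2)] by simp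
qed

lemma cond_exp_pos_exceed_count:
  assumes "finite C" and "\<And>x. x \<in> C \<Longrightarrow> Z x \<in> borel_measurable M"
  shows "cond_exp_pos M (exceed_count Z C v)
    = integral\<^sup>L M (exceed_count Z C v) / (1 - prob (max_le_event M Z C v))"
proof -
  have "integral\<^sup>L M (\<lambda>\<omega>. exceed_count Z C v \<omega> * indicator {\<omega>\<in>space M. 0 < exceed_count Z C v \<omega>} \<omega>)
      = integral\<^sup>L M (exceed_count Z C v)"
    using exceed_count_nonneg[of Z C v]
    by (intro Bochner_Integration.integral_cong) (auto simp: indicator_def order_less_le)
  then show ?thesis
    unfolding cond_exp_pos_def exceed_count_pos_set[OF assms(1)]
    using prob_compl[OF max_le_event_in_events[where Z=Z, OF assms]] by simp
qed

lemma one_minus_prob_max_le_event_le: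
  assumes "finite C" and meas: "\<And>x. x \<in> C \<Longrightarrow> Z x \<in> borel_measurable M"
  shows "1 - prob (max_le_event M Z C v) \<le> integral\<^sup>L M (exceed_count Z C v)"
proof -
  have "1 - prob (max_le_event M Z C v) = prob (space M - max_le_event M Z C v)"
    using prob_compl[OF max_le_event_in_events[where Z=Z and v=v, OF assms]] by simp
  also have "\<dots> = prob (\<Union>x\<in>C. {\<omega>\<in>space M. v < Z x \<omega>})"
    by (rule arg_cong[where f = prob]) (auto simp: max_le_event_def)
  also have "\<dots> \<le> (\<Sum>x\<in>C. prob {\<omega>\<in>space M. v < Z x \<omega>})"
  proof (intro finite_measure_subadditive_finite assms(1) image_subsetI)
    show "{\<omega>\<in>space M. v < Z x \<omega>} \<in> events" if "x \<in> C" for x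
      using meas[OF that] by measurable
  qed
  finally show ?thesis using integral_exceed_count[OF assms] by simp
qed

lemma expected_count_rescaled_deviation:
  assumes "finite A" "C \<subseteq> A"
    and meas: "\<And>x. x \<in> A \<Longrightarrow> Z x \<in> borel_measurable M"
    and distr: "\<And>x. x \<in> A \<Longrightarrow> prob {\<omega>\<in>space M. Z x \<omega> \<le> v} = c"
    and "\<bar>real (card C) * K / real (card A) - 1\<bar> \<le> \<delta>"
  shows "\<bar>K * integral\<^sup>L M (exceed_count Z C v) - \<tau>\<bar>
    \<le> \<delta> * \<bar>integral\<^sup>L M (exceed_count Z A v)\<bar> + \<bar>integral\<^sup>L M (exceed_count Z A v) - \<tau>\<bar>"
proof -
  have "finite C" using assms(1,2) by (rule finite_subset[rotated])
  then have "integral\<^sup>L M (exceed_count Z C v) = real (card C) * (1 - c)"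
    using assms(2) meas distr by (intro integral_exceed_count_eq_card) auto
  moreover have "integral\<^sup>L M (exceed_count Z A v) = real (card A) * (1 - c)"
    using assms(1) meas distr by (rule integral_exceed_count_eq_card)
  moreover have "card C \<le> card A" using assms(1,2) by (rule card_mono)
  ultimately show ?thesis using assms(5) by (simp add: abs_rescaled_sub_le)
qed

lemma mean_inverse_cond_exp_pos_tendsto:
  fixes C :: "nat \<Rightarrow> 'i \<Rightarrow> (real \<times> real) set"
  assumes fin: "\<And>n. finite (J n)"
    and J: "filterlim (\<lambda>n. real (card (J n))) at_top sequentially"
    and C_fin: "\<And>n i. i \<in> J n \<Longrightarrow> finite (C n i)"
    and meas: "\<And>n i x. i \<in> J n \<Longrightarrow> x \<in> C n i \<Longrightarrow> Z x \<in> borel_measurable M"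
    and dev: "\<And>n i. i \<in> J n \<Longrightarrow>
      \<bar>real (card (J n)) * integral\<^sup>L M (exceed_count Z (C n i) (u n)) - \<tau>\<bar> \<le> d n"
    and "d \<longlonglongrightarrow> 0" "\<tau> > 0"
    and prod: "(\<lambda>n. \<Prod>i\<in>J n. prob (max_le_event M Z (C n i) (u n))) \<longlonglongrightarrow> exp (- \<theta> * \<tau>)"
  shows "(\<lambda>n. (1 / real (card (J n))) *
      (\<Sum>i\<in>J n. inverse (cond_exp_pos M (exceed_count Z (C n i) (u n))))) \<longlonglongrightarrow> \<theta>"
proof -
  define p where "p n i = 1 - prob (max_le_event M Z (C n i) (u n))" for n i
  define e where "e n i = integral\<^sup>L M (exceed_count Z (C n i) (u n))" for n i
  have "(\<lambda>n. (1 / real (card (J n))) * (\<Sum>i\<in>J n. p n i / e n i)) \<longlonglongrightarrow> \<theta>"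
  proof (rule mean_ratio_tendsto[OF fin J _ _ \<open>d \<longlonglongrightarrow> 0\<close> \<open>\<tau> > 0\<close>])
    show "0 \<le> p n i \<and> p n i \<le> e n i" if "i \<in> J n" for n i
      unfolding p_def e_def using C_fin[OF that] meas[OF that]
      by (simp add: one_minus_prob_max_le_event_le)
    show "\<bar>real (card (J n)) * e n i - \<tau>\<bar> \<le> d n" if "i \<in> J n" for n i
      unfolding e_def by (rule dev[OF that])
    show "(\<lambda>n. \<Prod>i\<in>J n. 1 - p n i) \<longlonglongrightarrow> exp (- \<theta> * \<tau>)"
      unfolding p_def using prod by simp
  qed
  \<comment> \<open>This also covers \<open>p n i = 0\<close>, where both sides are \<open>0\<close> since \<open>x / 0 = 0\<close>.\<close>
  moreover have "inverse (cond_exp_pos M (exceed_count Z (C n i) (u n))) = p n i / e n i"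
    if "i \<in> J n" for n i
    using cond_exp_pos_exceed_count[where Z=Z and v="u n", OF C_fin[OF that] meas[OF that]]
    unfolding p_def e_def by (simp add: inverse_divide)
  ultimately show ?thesis
    by (simp cong: sum.cong)
qed

lemma grid_mean_inverse_cond_exp_pos_tendsto:
  fixes A :: "nat \<Rightarrow> (real \<times> real) set"
    and B :: "nat \<Rightarrow> nat \<Rightarrow> nat \<Rightarrow> (real \<times> real) set"
  assumes A_fin: "\<And>n. finite (A n)"
    and meas: "\<And>n x. x \<in> A n \<Longrightarrow> Z x \<in> borel_measurable M"
    and distr: "\<And>n x. x \<in> A n \<Longrightarrow> prob {\<omega>\<in>space M. Z x \<omega> \<le> u n} = c n"
    and "\<tau> > 0" and u_lim: "(\<lambda>n. integral\<^sup>L M (exceed_count Z (A n) (u n))) \<longlonglongrightarrow> \<tau>"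
    and k_lim: "filterlim k at_top sequentially"
    and B_sub: "\<And>n s t. s \<in> {1..k n} \<Longrightarrow> t \<in> {1..k n} \<Longrightarrow> B n s t \<subseteq> A n"
    and B_card: "(\<lambda>n. Max {\<bar>real (card (B n s t)) * (real (k n))\<^sup>2 / real (card (A n)) - 1\<bar> | s t.
      s \<in> {1..k n} \<and> t \<in> {1..k n}}) \<longlonglongrightarrow> 0"
    and B_approx: "(\<lambda>n. prob (max_le_event M Z (A n) (u n))
      - (\<Prod>s\<in>{1..k n}. \<Prod>t\<in>{1..k n}. prob (max_le_event M Z (B n s t) (u n)))) \<longlonglongrightarrow> 0"
    and A_lim: "(\<lambda>n. prob (max_le_event M Z (A n) (u n))) \<longlonglongrightarrow> exp (- \<theta> * \<tau>)"
  shows "(\<lambda>n. 1 / (real (k n))\<^sup>2 *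
    (\<Sum>s\<in>{1..k n}. \<Sum>t\<in>{1..k n}. inverse (cond_exp_pos M (exceed_count Z (B n s t) (u n)))))
    \<longlonglongrightarrow> \<theta>"
proof -
  define J where "J n = {1..k n} \<times> {1..k n}" for n
  define C where "C n = case_prod (B n)" for n
  define \<delta> where "\<delta> n = Max {\<bar>real (card (B n s t)) * (real (k n))\<^sup>2 / real (card (A n)) - 1\<bar> | s t.
    s \<in> {1..k n} \<and> t \<in> {1..k n}}" for n
  define e where "e n = integral\<^sup>L M (exceed_count Z (A n) (u n))" for n
  have C_sub: "C n i \<subseteq> A n" if "i \<in> J n" for n i
    using that unfolding J_def C_def by (cases i) (simp add: B_sub)
  have card_J: "real (card (J n)) = (real (k n))\<^sup>2" for n
    unfolding J_def by (simp add: card_cartesian_product power2_eq_square)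
  have "(\<lambda>n. 1 / real (card (J n)) *
      (\<Sum>i\<in>J n. inverse (cond_exp_pos M (exceed_count Z (C n i) (u n))))) \<longlonglongrightarrow> \<theta>"
  proof (rule mean_inverse_cond_exp_pos_tendsto)
    show "finite (J n)" for n unfolding J_def by simp
    show "filterlim (\<lambda>n. real (card (J n))) at_top sequentially"
      unfolding card_J
      by (intro filterlim_pow_at_top filterlim_compose[OF filterlim_real_sequentially k_lim]) simp
    show "finite (C n i)" "\<And>x. x \<in> C n i \<Longrightarrow> Z x \<in> borel_measurable M" if "i \<in> J n" for n i
      using C_sub[OF that] A_fin meas by (auto intro: finite_subset)
    show "\<bar>real (card (J n)) * integral\<^sup>L M (exceed_count Z (C n i) (u n)) - \<tau>\<bar>
        \<le> \<delta> n * \<bar>e n\<bar> + \<bar>e n - \<tau>\<bar>" if i: "i \<in> J n" for n i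
    proof -
      obtain s t where st: "i = (s, t)" "s \<in> {1..k n}" "t \<in> {1..k n}"
        using i unfolding J_def by auto
      have "\<bar>real (card (B n s t)) * (real (k n))\<^sup>2 / real (card (A n)) - 1\<bar> \<le> \<delta> n"
        unfolding \<delta>_def using st by (intro Max_ge finite_image_set2) auto
      then show ?thesis
        unfolding card_J C_def e_def st prod.case
        using A_fin B_sub[OF st(2,3)] meas distr by (intro expected_count_rescaled_deviation)
    qed
    have "(\<lambda>n. \<delta> n * \<bar>e n\<bar> + \<bar>e n - \<tau>\<bar>) \<longlonglongrightarrow> 0 * \<bar>\<tau>\<bar> + \<bar>\<tau> - \<tau>\<bar>"
      using B_card u_lim unfolding \<delta>_def e_def by (intro tendsto_intros)
    then show "(\<lambda>n. \<delta> n * \<bar>e n\<bar> + \<bar>e n - \<tau>\<bar>) \<longlonglongrightarrow> 0" by simp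
    show "\<tau> > 0" by fact
    from tendsto_diff[OF A_lim B_approx]
    show "(\<lambda>n. \<Prod>i\<in>J n. prob (max_le_event M Z (C n i) (u n))) \<longlonglongrightarrow> exp (- \<theta> * \<tau>)"
      unfolding J_def C_def prod.cartesian_product by (simp add: case_prod_beta')
  qed
  then show ?thesis
    unfolding mean_over_grid J_def C_def by (simp add: case_prod_beta')
qed

end

theorem proposition2p3:
  fixes M :: "'w measure"
    and A :: "nat \<Rightarrow> (real \<times> real) set"
    and Z :: "real \<times> real \<Rightarrow> 'w \<Rightarrow> real"
    and F :: "real \<Rightarrow> real"
    and \<tau> :: real
    and u :: "nat \<Rightarrow> real"
    and k :: "nat \<Rightarrow> nat"
    and B :: "nat \<Rightarrow> nat \<Rightarrow> nat \<Rightarrow> (real \<times> real) set"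
    and \<theta> :: real
  assumes M: "prob_space M"
    and A_fin: "\<And>n. finite (A n)"
    and A_incr: "\<And>n. A n \<subseteq> A (Suc n)"
    and A_isolated: "\<And>x. x \<in> (\<Union>n. A n) \<Longrightarrow> \<not> x islimpt (\<Union>n. A n)"
    and A_card: "filterlim (\<lambda>n. card (A n)) at_top sequentially"
    and Z_meas: "\<And>x. x \<in> (\<Union>n. A n) \<Longrightarrow> Z x \<in> borel_measurable M"
    and Z_distr: "\<And>x v. x \<in> (\<Union>n. A n) \<Longrightarrow> measure M {\<omega>\<in>space M. Z x \<omega> \<le> v} = F v"
    and tau_pos: "\<tau> > 0"
    and u_lim: "(\<lambda>n. integral\<^sup>L M (exceed_count Z (A n) (u n))) \<longlonglongrightarrow> \<tau>"
    and D: "\<exists>l. cond_D M Z A u k l"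
    and B_sub: "\<And>n s t. s \<in> {1..k n} \<Longrightarrow> t \<in> {1..k n} \<Longrightarrow> B n s t \<subseteq> A n"
    and B_disj: "\<And>n s t s' t'. s \<in> {1..k n} \<Longrightarrow> t \<in> {1..k n} \<Longrightarrow> s' \<in> {1..k n} \<Longrightarrow> t' \<in> {1..k n}
                   \<Longrightarrow> (s, t) \<noteq> (s', t') \<Longrightarrow> B n s t \<inter> B n s' t' = {}"
    and B_card: "(\<lambda>n. Max {\<bar>real (card (B n s t)) * (real (k n))\<^sup>2 / real (card (A n)) - 1\<bar> | s t.
                            s \<in> {1..k n} \<and> t \<in> {1..k n}}) \<longlonglongrightarrow> 0"
    and B_approx: "(\<lambda>n. measure M (max_le_event M Z (A n) (u n))
                       - (\<Prod>s\<in>{1..k n}. \<Prod>t\<in>{1..k n}. measure M (max_le_event M Z (B n s t) (u n))))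
                    \<longlonglongrightarrow> 0"
    and SEI: "spatial_extremal_index M Z A \<theta>"
  shows "(\<lambda>n. (1 / (real (k n))\<^sup>2) *
            (\<Sum>s\<in>{1..k n}. \<Sum>t\<in>{1..k n}. inverse (cond_exp_pos M (exceed_count Z (B n s t) (u n)))))
           \<longlonglongrightarrow> \<theta>
      \<and> ((\<forall>\<epsilon>>0. \<exists>N. \<forall>n\<ge>N. \<forall>s\<in>{1..k n}. \<forall>t\<in>{1..k n}.
             \<bar>cond_exp_pos M (exceed_count Z (B n s t) (u n)) - 1\<bar> < \<epsilon>) \<longrightarrow> \<theta> = 1)"
proof -
  interpret prob_space M by (rule M)
  obtain l where "cond_D M Z A u k l" using D by blast
  then have k_pos: "\<And>n. 0 < k n" and k_lim: "filterlim k at_top sequentially"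
    unfolding cond_D_def by auto
  have A_lim: "(\<lambda>n. prob (max_le_event M Z (A n) (u n))) \<longlonglongrightarrow> exp (- \<theta> * \<tau>)"
    using SEI tau_pos u_lim unfolding spatial_extremal_index_def by blast
  have "(\<lambda>n. 1 / (real (k n))\<^sup>2 *
      (\<Sum>s\<in>{1..k n}. \<Sum>t\<in>{1..k n}. inverse (cond_exp_pos M (exceed_count Z (B n s t) (u n)))))
      \<longlonglongrightarrow> \<theta>"
    by (rule grid_mean_inverse_cond_exp_pos_tendsto[where c = "\<lambda>n. F (u n)",
          OF A_fin _ _ tau_pos u_lim k_lim B_sub B_card B_approx A_lim])
      (use Z_meas Z_distr in blast)+
  moreover have "(\<lambda>n. 1 / (real (k n))\<^sup>2 *
      (\<Sum>s\<in>{1..k n}. \<Sum>t\<in>{1..k n}. inverse (cond_exp_pos M (exceed_count Z (B n s t) (u n)))))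
      \<longlonglongrightarrow> 1"
    if "\<forall>\<epsilon>>0. \<exists>N. \<forall>n\<ge>N. \<forall>s\<in>{1..k n}. \<forall>t\<in>{1..k n}.
      \<bar>cond_exp_pos M (exceed_count Z (B n s t) (u n)) - 1\<bar> < \<epsilon>"
    unfolding mean_over_grid split_def
    using that k_pos by (intro mean_inverse_tendsto_one) (auto simp: Suc_le_eq)
  ultimately show ?thesis
    using LIMSEQ_unique by blast
qed

end
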